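(* Let $a,n\in\mathbb{N}$, $k_1,\ldots,k_n\in\mathbb{N}$, let $f_1,\ldots,f_n$, $g_1,\ldots,g_n$, $h_1,\ldots,h_n$ be arbitrary arithmetic functions, and let $\omega$ be a completely additive function. Writing in each summand $M=\operatorname{lcm}(d_1,\ldots,d_n)$ and $L=K/M$, we have $$U_{\omega}^{(a)}(k_1,\ldots,k_n)=\sum_{d_1|k_1,\ldots,d_n|k_n}\omega(M^a)\Bigl(\prod_{i=1}^n f_i(d_i)g_i\Bigl(\frac{k_i}{d_i}\Bigr)\Bigr)\sum_{\ell=1}^{L^a}\prod_{i=1}^n h_i\Bigl(\Bigl(\frac{M}{d_i}\Bigr)^a\ell\Bigr)+\sum_{d_1|k_1,\ldots,d_n|k_n}\Bigl(\prod_{i=1}^n f_i(d_i)g_i\Bigl(\frac{k_i}{d_i}\Bigr)\Bigr)\sum_{\ell=1}^{L^a}\omega(\ell)\prod_{i=1}^n h_i\Bigl(\Bigl(\frac{M}{d_i}\Bigr)^a\ell\Bigr).$$ If in addition $h_1,\ldots,h_n$ are completely multiplicative, then $$U_{\omega}^{(a)}(k_1,\ldots,k_n)=\sum_{d_1|k_1,\ldots,d_n|k_n}\omega(M^a)\Bigl(\prod_{i=1}^n f_i(d_i)g_i\Bigl(\frac{k_i}{d_i}\Bigr)h_i\Bigl(\frac{M}{d_i}\Bigr)^a\Bigr)\sum_{\ell=1}^{L^a}\prod_{i=1}^n h_i(\ell)+\sum_{d_1|k_1,\ldots,d_n|k_n}\Bigl(\prod_{i=1}^n f_i(d_i)g_i\Bigl(\frac{k_i}{d_i}\Bigr)h_i\Bigl(\frac{M}{d_i}\Bigr)^a\Bigr)\sum_{\ell=1}^{L^a}\omega(\ell)\prod_{i=1}^n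 h_i(\ell).$$
   Context: An arithmetic function is a map $\mathbb{N}\to\mathbb{C}$. $\omega$ is completely additive if $\omega(mn)=\omega(m)+\omega(n)$ for all $m,n\in\mathbb{N}$; $h$ is completely multiplicative if $h(1)=1$ and $h(mn)=h(m)h(n)$ for all $m,n$. For $a\in\mathbb{N}$ and arithmetic functions $f,g,h$, $s^{(a)}_{f,g,h}(k,j)=\sum_{d|k,\ d^a|j} f(d)\,g(k/d)\,h(j/d^a)$ for $k,j\in\mathbb{N}$. Given $k_1,\ldots,k_n$, $K=\operatorname{lcm}(k_1,\ldots,k_n)$ and $U_{\omega}^{(a)}(k_1,\ldots,k_n)=\sum_{j=1}^{K^a}\omega(j)\prod_{i=1}^n s^{(a)}_{f_i,g_i,h_i}(k_i,j)$. *)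

theory Defs
  imports Complex_Main "HOL-Library.FuncSet"
begin

text \<open>Arithmetic functions are modelled as maps nat \<Rightarrow> complex; only
  their values at positive arguments matter.\<close>

definition completely_additive :: "(nat \<Rightarrow> complex) \<Rightarrow> bool" where
  "completely_additive w \<longleftrightarrow> (\<forall>m n. m > 0 \<longrightarrow> n > 0 \<longrightarrow> w (m * n) = w m + w n)"

definition completely_multiplicative :: "(nat \<Rightarrow> complex) \<Rightarrow> bool" where
  "completely_multiplicative h \<longleftrightarrow> h 1 = 1 \<and>
     (\<forall>m n. m > 0 \<longrightarrow> n > 0 \<longrightarrow> h (m * n) = h m * h n)"

definition s_fun :: "nat \<Rightarrow> (nat \<Rightarrow> complex) \<Rightarrow> (nat \<Rightarrow> complex) \<Rightarrow> (nat \<Rightarrow> complex)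
    \<Rightarrow> nat \<Rightarrow> nat \<Rightarrow> complex" where
  "s_fun a f g h k j = (\<Sum>d \<in> {d. d dvd k \<and> d ^ a dvd j}. f d * g (k div d) * h (j div d ^ a))"

definition U_fun :: "nat \<Rightarrow> (nat \<Rightarrow> complex) \<Rightarrow> (nat \<Rightarrow> nat \<Rightarrow> complex) \<Rightarrow> (nat \<Rightarrow> nat \<Rightarrow> complex)
    \<Rightarrow> (nat \<Rightarrow> nat \<Rightarrow> complex) \<Rightarrow> nat \<Rightarrow> (nat \<Rightarrow> nat) \<Rightarrow> complex" where
  "U_fun a w f g h n k =
     (\<Sum>j = 1..(Lcm (k ` {1..n})) ^ a. w j * (\<Prod>i = 1..n. s_fun a (f i) (g i) (h i) (k i) j))"

end

theory Submission
  imports Defs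
begin

text \<open>Multiplying out the product of the sums s_i turns U into a sum over tuples
  (d_1, ..., d_n) of divisors of the k_i, where the j-th summand survives iff every d_i^a
  divides j, i.e. iff M^a divides j for M = lcm(d_1, ..., d_n). Writing j = M^a l, the range
  1..K^a of j becomes the range 1..L^a of l, and complete additivity splits w(M^a l) into
  w(M^a) + w(l). For completely multiplicative h_i one further factors
  h_i((M/d_i)^a l) = h_i(M/d_i)^a h_i(l).\<close>

lemma lcm_power_nat: "lcm (x::nat) y ^ a = lcm (x ^ a) (y ^ a)"
proof (cases "gcd x y = 0")
  case True
  then show ?thesis by (cases a) auto
next
  case False
  have "lcm x y ^ a * gcd x y ^ a = lcm (x ^ a) (y ^ a) * gcd x y ^ a"
    using lcm_gcd_prod[of x y] lcm_gcd_prod[of "x ^ a" "y ^ a"]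
    by (simp add: power_mult_distrib[symmetric])
  then show ?thesis using False by auto
qed

lemma Lcm_power_nat: "finite A \<Longrightarrow> Lcm (A::nat set) ^ a = Lcm ((\<lambda>x. x ^ a) ` A)"
  by (induction A rule: finite_induct) (auto simp: lcm_power_nat)

lemma Lcm_power_dvd_iff:
  "finite I \<Longrightarrow> Lcm (d ` I) ^ a dvd (j::nat) \<longleftrightarrow> (\<forall>i\<in>I. d i ^ a dvd j)"
  by (simp add: Lcm_power_nat Lcm_dvd_iff image_image)

lemma sum_multiples:
  fixes G :: "nat \<Rightarrow> 'b::comm_monoid_add"
  assumes "m > 0" "m dvd N"
  shows "(\<Sum>j=1..N. if m dvd j then G j else 0) = (\<Sum>l=1..N div m. G (m * l))"
proof -
  have "(\<Sum>j=1..N. if m dvd j then G j else 0) = (\<Sum>j\<in>{j\<in>{1..N}. m dvd j}. G j)"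
    by (rule sum.inter_filter[symmetric]) simp
  also have "{j\<in>{1..N}. m dvd j} = (*) m ` {1..N div m}"
    using assms by (auto simp: dvd_def)
  also have "(\<Sum>j\<in>(*) m ` {1..N div m}. G j) = (\<Sum>l=1..N div m. G (m * l))"
    using assms by (subst sum.reindex) (auto simp: inj_on_def)
  finally show ?thesis .
qed

lemma prod_if_zero:
  fixes x :: "'i \<Rightarrow> 'b::comm_semiring_1"
  assumes "finite I"
  shows "(\<Prod>i\<in>I. if P i then x i else 0) = (if \<forall>i\<in>I. P i then \<Prod>i\<in>I. x i else 0)"
  using assms by (auto intro!: prod_zero)

lemma s_fun_eq_sum_if:
  assumes "k > 0"
  shows "s_fun a f g h k j =
    (\<Sum>e | e dvd k. if e ^ a dvd j then f e * g (k div e) * h (j div e ^ a) else 0)"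
  unfolding s_fun_def using assms sum.inter_filter[of "{e. e dvd k}" _ "\<lambda>e. e ^ a dvd j"]
  by simp

lemma Lcm_divisors_pos:
  assumes "finite I" "\<forall>i\<in>I. k i > 0" "d \<in> (\<Pi>\<^sub>E i\<in>I. {e. e dvd k i})"
  shows "Lcm (d ` I) > (0::nat)"
  using assms by (auto simp: PiE_iff Lcm_0_iff intro!: Nat.gr0I) (metis dvd_0_left_iff not_less0)

lemma Lcm_divisors_dvd:
  assumes "d \<in> (\<Pi>\<^sub>E i\<in>I. {e. e dvd k i})"
  shows "Lcm (d ` I) dvd (Lcm (k ` I) :: nat)"
  using assms by (auto simp: PiE_iff intro!: Lcm_least intro: dvd_trans dvd_Lcm)

lemma completely_multiplicative_power_mult:
  assumes "completely_multiplicative h" "x > 0" "l > 0"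
  shows "h (x ^ a * l) = h x ^ a * h l"
proof -
  have "h (x ^ b) = h x ^ b" for b
    using assms(1,2) by (induction b) (auto simp: completely_multiplicative_def)
  then show ?thesis
    using assms by (simp add: completely_multiplicative_def)
qed

lemma prod_s_fun_expand:
  assumes "finite I" "\<forall>i\<in>I. k i > 0"
  shows "(\<Prod>i\<in>I. s_fun a (f i) (g i) (h i) (k i) j) =
    (\<Sum>d \<in> (\<Pi>\<^sub>E i\<in>I. {e. e dvd k i}).
       if Lcm (d ` I) ^ a dvd j
       then (\<Prod>i\<in>I. f i (d i) * g i (k i div d i)) * (\<Prod>i\<in>I. h i (j div d i ^ a)) else 0)"
proof -
  have "(\<Prod>i\<in>I. s_fun a (f i) (g i) (h i) (k i) j) =
      (\<Prod>i\<in>I. \<Sum>e | e dvd k i.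
         if e ^ a dvd j then f i e * g i (k i div e) * h i (j div e ^ a) else 0)"
    using assms(2) by (simp add: s_fun_eq_sum_if)
  also have "\<dots> = (\<Sum>d \<in> (\<Pi>\<^sub>E i\<in>I. {e. e dvd k i}). \<Prod>i\<in>I.
      if d i ^ a dvd j then f i (d i) * g i (k i div d i) * h i (j div d i ^ a) else 0)"
    using assms by (simp add: prod_sum_PiE)
  finally show ?thesis
    using assms(1) by (simp add: prod_if_zero Lcm_power_dvd_iff prod.distrib cong: if_cong)
qed

lemma sum_weighted_prod_s_fun:
  fixes W :: "nat \<Rightarrow> complex"
  assumes I: "finite I" "\<forall>i\<in>I. k i > 0"
  shows "(\<Sum>j = 1..Lcm (k ` I) ^ a. W j * (\<Prod>i\<in>I. s_fun a (f i) (g i) (h i) (k i) j)) =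
    (\<Sum>d \<in> (\<Pi>\<^sub>E i\<in>I. {e. e dvd k i}).
       (\<Prod>i\<in>I. f i (d i) * g i (k i div d i))
       * (\<Sum>l = 1..(Lcm (k ` I) div Lcm (d ` I)) ^ a.
            W (Lcm (d ` I) ^ a * l) * (\<Prod>i\<in>I. h i ((Lcm (d ` I) div d i) ^ a * l))))"
    (is "?lhs = (\<Sum>d \<in> ?D. ?P d * _)")
proof -
  let ?K = "Lcm (k ` I)" and ?M = "\<lambda>d. Lcm (d ` I)"
  have "?lhs = (\<Sum>j = 1..?K ^ a. \<Sum>d \<in> ?D.
      W j * (if ?M d ^ a dvd j then ?P d * (\<Prod>i\<in>I. h i (j div d i ^ a)) else 0))"
    by (simp add: prod_s_fun_expand[OF I] sum_distrib_left)
  also have "\<dots> = (\<Sum>d \<in> ?D. \<Sum>j = 1..?K ^ a.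
      if ?M d ^ a dvd j then ?P d * (W j * (\<Prod>i\<in>I. h i (j div d i ^ a))) else 0)"
    by (subst sum.swap) (intro sum.cong refl; simp add: mult.left_commute)
  also have "\<dots> = (\<Sum>d \<in> ?D. ?P d * (\<Sum>l = 1..(?K div ?M d) ^ a.
      W (?M d ^ a * l) * (\<Prod>i\<in>I. h i ((?M d div d i) ^ a * l))))"
  proof (rule sum.cong[OF refl])
    fix d assume d: "d \<in> ?D"
    have M: "?M d > 0" "?M d dvd ?K"
      using Lcm_divisors_pos[OF I d] Lcm_divisors_dvd[OF d] by auto
    have d_dvd_M: "d i ^ a dvd ?M d ^ a" if "i \<in> I" for i
      using that by (simp add: dvd_Lcm dvd_power_same)
    have "(\<Sum>j = 1..?K ^ a.
          if ?M d ^ a dvd j then ?P d * (W j * (\<Prod>i\<in>I. h i (j div d i ^ a))) else 0)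
        = (\<Sum>l = 1..(?K div ?M d) ^ a.
          ?P d * (W (?M d ^ a * l) * (\<Prod>i\<in>I. h i (?M d ^ a * l div d i ^ a))))"
      using M by (subst sum_multiples) (simp_all add: dvd_power_same div_power)
    also have "\<dots> = ?P d * (\<Sum>l = 1..(?K div ?M d) ^ a.
        W (?M d ^ a * l) * (\<Prod>i\<in>I. h i ((?M d div d i) ^ a * l)))"
      using M(2) d_dvd_M
      by (auto simp: sum_distrib_left dvd_div_mult div_power intro!: sum.cong prod.cong)
    finally show "(\<Sum>j = 1..?K ^ a.
          if ?M d ^ a dvd j then ?P d * (W j * (\<Prod>i\<in>I. h i (j div d i ^ a))) else 0)
        = ?P d * (\<Sum>l = 1..(?K div ?M d) ^ a.
          W (?M d ^ a * l) * (\<Prod>i\<in>I. h i ((?M d div d i) ^ a * l)))" .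
  qed
  finally show ?thesis .
qed

lemma sum_weighted_prod_s_fun_completely_multiplicative:
  fixes W :: "nat \<Rightarrow> complex"
  assumes I: "finite I" "\<forall>i\<in>I. k i > 0"
    and h: "\<forall>i\<in>I. completely_multiplicative (h i)"
  shows "(\<Sum>j = 1..Lcm (k ` I) ^ a. W j * (\<Prod>i\<in>I. s_fun a (f i) (g i) (h i) (k i) j)) =
    (\<Sum>d \<in> (\<Pi>\<^sub>E i\<in>I. {e. e dvd k i}).
       (\<Prod>i\<in>I. f i (d i) * g i (k i div d i) * h i (Lcm (d ` I) div d i) ^ a)
       * (\<Sum>l = 1..(Lcm (k ` I) div Lcm (d ` I)) ^ a.
            W (Lcm (d ` I) ^ a * l) * (\<Prod>i\<in>I. h i l)))"
  unfolding sum_weighted_prod_s_fun[OF I]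
proof (rule sum.cong[OF refl])
  fix d assume d: "d \<in> (\<Pi>\<^sub>E i\<in>I. {e. e dvd k i})"
  let ?M = "Lcm (d ` I)"
  have quotient_pos: "?M div d i > 0" if "i \<in> I" for i
    using that d Lcm_divisors_pos[OF I d] I(2)
    by (auto simp: PiE_iff dvd_Lcm dvd_div_eq_0_iff intro!: Nat.gr0I dest!: bspec[of _ _ i])
  have "(\<Prod>i\<in>I. h i ((?M div d i) ^ a * l)) =
      (\<Prod>i\<in>I. h i (?M div d i) ^ a) * (\<Prod>i\<in>I. h i l)"
    if "l \<in> {1..(Lcm (k ` I) div ?M) ^ a}" for l
    using that h quotient_pos
    by (simp add: completely_multiplicative_power_mult prod.distrib[symmetric])
  then show "(\<Prod>i\<in>I. f i (d i) * g i (k i div d i))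
      * (\<Sum>l = 1..(Lcm (k ` I) div ?M) ^ a.
           W (?M ^ a * l) * (\<Prod>i\<in>I. h i ((?M div d i) ^ a * l)))
    = (\<Prod>i\<in>I. f i (d i) * g i (k i div d i) * h i (?M div d i) ^ a)
      * (\<Sum>l = 1..(Lcm (k ` I) div ?M) ^ a. W (?M ^ a * l) * (\<Prod>i\<in>I. h i l))"
    by (simp add: prod.distrib sum_distrib_left mult_ac)
qed

lemma sum_completely_additive_split:
  assumes w: "completely_additive w" and M: "\<forall>d\<in>D. M d > 0"
  shows "(\<Sum>d\<in>D. Q d * (\<Sum>l = 1..L d. w (M d * l) * R d l)) =
    (\<Sum>d\<in>D. w (M d) * Q d * (\<Sum>l = 1..L d. R d l))
    + (\<Sum>d\<in>D. Q d * (\<Sum>l = 1..L d. w l * R d l))"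
proof -
  have "Q d * (\<Sum>l = 1..L d. w (M d * l) * R d l) =
      w (M d) * Q d * (\<Sum>l = 1..L d. R d l) + Q d * (\<Sum>l = 1..L d. w l * R d l)"
    if d: "d \<in> D" for d
  proof -
    have "(\<Sum>l = 1..L d. w (M d * l) * R d l) =
        (\<Sum>l = 1..L d. w (M d) * R d l + w l * R d l)"
      using w M d by (intro sum.cong refl) (auto simp: completely_additive_def distrib_right)
    then show ?thesis
      by (simp add: sum.distrib sum_distrib_left algebra_simps)
  qed
  then show ?thesis
    by (simp add: sum.distrib[symmetric])
qed

theorem theorem2:
  fixes a n :: nat and k :: "nat \<Rightarrow> nat"
    and f g h :: "nat \<Rightarrow> nat \<Rightarrow> complex" and w :: "nat \<Rightarrow> complex"
  assumes "a \<ge> 1" and "n \<ge> 1"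
    and "\<forall>i \<in> {1..n}. k i \<ge> 1"
    and "completely_additive w"
  shows "(U_fun a w f g h n k =
      (\<Sum>d \<in> (\<Pi>\<^sub>E i\<in>{1..n}. {e. e dvd k i}).
          w ((Lcm (d ` {1..n})) ^ a)
          * (\<Prod>i = 1..n. f i (d i) * g i (k i div d i))
          * (\<Sum>l = 1..(Lcm (k ` {1..n}) div Lcm (d ` {1..n})) ^ a.
               \<Prod>i = 1..n. h i ((Lcm (d ` {1..n}) div d i) ^ a * l)))
    + (\<Sum>d \<in> (\<Pi>\<^sub>E i\<in>{1..n}. {e. e dvd k i}).
          (\<Prod>i = 1..n. f i (d i) * g i (k i div d i))
          * (\<Sum>l = 1..(Lcm (k ` {1..n}) div Lcm (d ` {1..n})) ^ a.
               w l * (\<Prod>i = 1..n. h i ((Lcm (d ` {1..n}) div d i) ^ a * l)))))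
    \<and> ((\<forall>i \<in> {1..n}. completely_multiplicative (h i)) \<longrightarrow>
      U_fun a w f g h n k =
      (\<Sum>d \<in> (\<Pi>\<^sub>E i\<in>{1..n}. {e. e dvd k i}).
          w ((Lcm (d ` {1..n})) ^ a)
          * (\<Prod>i = 1..n. f i (d i) * g i (k i div d i) * (h i (Lcm (d ` {1..n}) div d i)) ^ a)
          * (\<Sum>l = 1..(Lcm (k ` {1..n}) div Lcm (d ` {1..n})) ^ a.
               \<Prod>i = 1..n. h i l))
    + (\<Sum>d \<in> (\<Pi>\<^sub>E i\<in>{1..n}. {e. e dvd k i}).
          (\<Prod>i = 1..n. f i (d i) * g i (k i div d i) * (h i (Lcm (d ` {1..n}) div d i)) ^ a)
          * (\<Sum>l = 1..(Lcm (k ` {1..n}) div Lcm (d ` {1..n})) ^ a.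
               w l * (\<Prod>i = 1..n. h i l))))"
proof -
  have I: "finite {1..n}" "\<forall>i\<in>{1..n}. k i > 0"
    using assms(3) by auto
  have M: "\<forall>d \<in> (\<Pi>\<^sub>E i\<in>{1..n}. {e. e dvd k i}). Lcm (d ` {1..n}) ^ a > 0"
    using Lcm_divisors_pos[OF I] by simp
  show ?thesis
    unfolding U_fun_def
    using sum_weighted_prod_s_fun_completely_multiplicative[OF I,
        where W = w and a = a and f = f and g = g and h = h]
    by (simp only: sum_weighted_prod_s_fun[OF I] sum_completely_additive_split[OF assms(4) M]) blast
qed

end
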